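(* Let $(L,\vee,\wedge,0,1)$ be a complemented modular lattice with $0\ne1$ and $a,b,c\in L$. Then $a\odot b\le\{c\}$ if and only if $\{a\}\le b\to c$.
   Context: For $a\in L$, $a^+:=\{x\in L\mid a\vee x=1,\ a\wedge x=0\}$ (the set of all complements of $a$). Define $a\odot b:=\{b\wedge(a\vee x)\mid x\in b^+\}$ and $a\to b:=\{x\vee(a\wedge b)\mid x\in a^+\}$. For $A,B\subseteq L$, $A\le B$ means $x\le y$ for all $x\in A$ and all $y\in B$. *)

theory Defs
  imports Main
begin

definition modular_lattice :: "'a::bounded_lattice itself \<Rightarrow> bool" where
  "modular_lattice _ \<longleftrightarrow> (\<forall>x y z::'a. x \<le> z \<longrightarrow> sup x (inf y z) = inf (sup x y) z)"

definition complements :: "'a::bounded_lattice \<Rightarrow> 'a set" where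
  "complements a = {x. sup a x = top \<and> inf a x = bot}"

definition complemented_lattice :: "'a::bounded_lattice itself \<Rightarrow> bool" where
  "complemented_lattice _ \<longleftrightarrow> (\<forall>a::'a. complements a \<noteq> {})"

definition odot :: "'a::bounded_lattice \<Rightarrow> 'a \<Rightarrow> 'a set" where
  "odot a b = {inf b (sup a x) | x. x \<in> complements b}"

definition arrow :: "'a::bounded_lattice \<Rightarrow> 'a \<Rightarrow> 'a set" where
  "arrow a b = {sup x (inf a b) | x. x \<in> complements a}"

definition set_le :: "'a::order set \<Rightarrow> 'a set \<Rightarrow> bool" where
  "set_le A B \<longleftrightarrow> (\<forall>x\<in>A. \<forall>y\<in>B. x \<le> y)"

end

theory Submission
  imports Defs
begin

text \<open>For each single complement \<open>y\<close> of \<open>b\<close>, the maps \<open>a \<mapsto> b \<sqinter> (a \<squnion> y)\<close> and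
  \<open>c \<mapsto> y \<squnion> (b \<sqinter> c)\<close> form a Galois connection; by modularity both composites are
  absorbed, because \<open>y \<squnion> (b \<sqinter> z) = z\<close> for \<open>z \<ge> y\<close> and \<open>b \<sqinter> (y \<squnion> w) = w\<close> for \<open>w \<le> b\<close>.
  Quantifying over all complements \<open>y\<close> gives the theorem.\<close>

lemma modular_latticeD:
  fixes x y z :: "'a::bounded_lattice"
  assumes "modular_lattice TYPE('a)" and "x \<le> z"
  shows "sup x (inf y z) = inf (sup x y) z"
  using assms unfolding modular_lattice_def by blast

lemma complements_sup_inf_absorb:
  fixes b y z :: "'a::bounded_lattice"
  assumes "modular_lattice TYPE('a)" and "y \<in> complements b" and "y \<le> z"
  shows "sup y (inf b z) = z"
proof -
  have "sup y (inf b z) = inf (sup y b) z"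
    using modular_latticeD[OF assms(1,3)] .
  also have "\<dots> = z"
    using assms(2) by (simp add: complements_def sup_commute)
  finally show ?thesis .
qed

lemma complements_inf_sup_absorb:
  fixes b y w :: "'a::bounded_lattice"
  assumes "modular_lattice TYPE('a)" and "y \<in> complements b" and "w \<le> b"
  shows "inf b (sup y w) = w"
proof -
  have "inf b (sup y w) = sup w (inf y b)"
    using modular_latticeD[OF assms(1,3), of y] by (simp add: inf_commute sup_commute)
  also have "\<dots> = w"
    using assms(2) by (simp add: complements_def inf_commute)
  finally show ?thesis .
qed

lemma complements_inf_sup_le_iff:
  fixes a b c y :: "'a::bounded_lattice"
  assumes "modular_lattice TYPE('a)" and "y \<in> complements b"
  shows "inf b (sup a y) \<le> c \<longleftrightarrow> a \<le> sup y (inf b c)"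
proof
  assume "inf b (sup a y) \<le> c"
  then have "inf b (sup a y) \<le> inf b c"
    by simp
  have "a \<le> sup y (inf b (sup a y))"
    using complements_sup_inf_absorb[OF assms, of "sup a y"] by simp
  also have "\<dots> \<le> sup y (inf b c)"
    using \<open>inf b (sup a y) \<le> inf b c\<close> by (rule sup_mono[OF order_refl])
  finally show "a \<le> sup y (inf b c)" .
next
  assume "a \<le> sup y (inf b c)"
  then have "inf b (sup a y) \<le> inf b (sup y (inf b c))"
    by (simp add: le_infI2)
  also have "\<dots> = inf b c"
    using complements_inf_sup_absorb[OF assms, of "inf b c"] by simp
  finally show "inf b (sup a y) \<le> c"
    by simp
qed

theorem theorem5:
  fixes a b c :: "'a::bounded_lattice"
  assumes "modular_lattice TYPE('a)"
    and "complemented_lattice TYPE('a)"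
    and "(bot::'a) \<noteq> top"
  shows "set_le (odot a b) {c} \<longleftrightarrow> set_le {a} (arrow b c)"
proof -
  have "set_le (odot a b) {c} \<longleftrightarrow> (\<forall>y\<in>complements b. inf b (sup a y) \<le> c)"
    unfolding set_le_def odot_def by blast
  also have "\<dots> \<longleftrightarrow> (\<forall>y\<in>complements b. a \<le> sup y (inf b c))"
    using complements_inf_sup_le_iff[OF assms(1)] by blast
  also have "\<dots> \<longleftrightarrow> set_le {a} (arrow b c)"
    unfolding set_le_def arrow_def by blast
  finally show ?thesis .
qed

end
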